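(* Let $A$ be a Noetherian commutative ring with identity, let $A[\mathbf{x}]=A[x_1,\ldots,x_n]$ be equipped with a monomial order, let $I\subset A[\mathbf{x}]$ be an ideal, let $p\subset A$ be a prime, and let $B=A_p/(I\cap A)_p$. If for each monomial $\mathbf{x}^E$ the ideal $\mathrm{in}(I)_E\,B$ is either $(0)$ or $(1)$, then $$\mathrm{in}(I)\,k(p)[\mathbf{x}]=\mathrm{in}(I\,k(p)[\mathbf{x}]).$$
   Context: A monomial order $>$ is a total order on monomials such that $\mathbf{x}^E>\mathbf{x}^F$ implies $\mathbf{x}^G\mathbf{x}^E>\mathbf{x}^G\mathbf{x}^F$, and $x_i>1$ for each $i$. $\mathrm{in}(f)$ is the greatest term $c\,\mathbf{x}^E$ ($c\neq0$) of a nonzero polynomial $f$; $\mathrm{in}(I)$ is the ideal generated by all $\mathrm{in}(f)$, $f\in I$. For an ideal $J\subset A[\mathbf{x}]$ and exponent $E$, the coefficient ideal is $J_E=(c\in A\mid c\,\mathbf{x}^E\in J)$; $J_E B$ is the ideal of $B$ generated by its image. $k(p)=A_p/pA_p$ is the residue field of $p$, and $K\,k(p)[\mathbf{x}]$ denotes the ideal generated by the image of $K\subset A[\mathbf{x}]$ under the coefficientwise map $A\to k(p)$. *)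

theory Defs
  imports Main "HOL-Library.Poly_Mapping"
begin

definition is_ideal :: "'a::comm_ring set \<Rightarrow> bool" where
  "is_ideal J \<longleftrightarrow> 0 \<in> J \<and> (\<forall>x\<in>J. \<forall>y\<in>J. x + y \<in> J) \<and> (\<forall>r. \<forall>x\<in>J. r * x \<in> J)"

definition ideal_gen :: "'a::comm_ring set \<Rightarrow> 'a set" where
  "ideal_gen S = \<Inter> {J. is_ideal J \<and> S \<subseteq> J}"

definition prime_ideal :: "'a::comm_ring_1 set \<Rightarrow> bool" where
  "prime_ideal P \<longleftrightarrow> is_ideal P \<and> 1 \<notin> P \<and> (\<forall>a b. a * b \<in> P \<longrightarrow> a \<in> P \<or> b \<in> P)"

definition noetherian_ring :: "'a::comm_ring_1 itself \<Rightarrow> bool" where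
  "noetherian_ring _ \<longleftrightarrow> (\<forall>J::'a set. is_ideal J \<longrightarrow> (\<exists>F. finite F \<and> J = ideal_gen F))"

text \<open>The target ring is only required to be of class \<open>comm_ring\<close> (not
  \<open>comm_ring_1\<close>, which forces \<open>0 \<noteq> 1\<close>), so that the zero ring \<open>A_P/K_P = 0\<close>
  (when \<open>K \<not>\<subseteq> P\<close>) is allowed; its identity is \<open>\<psi> 1\<close>.\<close>
text \<open>\<open>is_loc_quot P K \<psi>\<close>: the ring hom \<open>\<psi> : A \<rightarrow> R\<close> identifies \<open>R\<close> with
  \<open>A_P / K_P\<close> (with \<open>\<psi>\<close> the canonical map \<open>a \<mapsto> a/1\<close>). This is the standard
  characterisation of this ring: \<open>\<psi>\<close> is a ring homomorphism, elements outside
  \<open>P\<close> become units, every element is of the form \<open>\<psi> a / \<psi> s\<close> with \<open>s \<notin> P\<close>, and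
  \<open>\<psi> a = 0\<close> iff \<open>a/1 \<in> K_P\<close>, i.e. iff \<open>s a \<in> K\<close> for some \<open>s \<notin> P\<close>.
  For \<open>K = P\<close> this is the residue field \<open>k(P) = A_P / P A_P\<close>.\<close>
definition is_loc_quot :: "'a::comm_ring_1 set \<Rightarrow> 'a set \<Rightarrow> ('a \<Rightarrow> 'b::comm_ring) \<Rightarrow> bool" where
  "is_loc_quot P K \<psi> \<longleftrightarrow>
     (\<forall>y. \<psi> 1 * y = y) \<and> (\<forall>a b. \<psi> (a + b) = \<psi> a + \<psi> b) \<and> (\<forall>a b. \<psi> (a * b) = \<psi> a * \<psi> b) \<and>
     (\<forall>s. s \<notin> P \<longrightarrow> (\<exists>u. \<psi> s * u = \<psi> 1)) \<and>
     (\<forall>y. \<exists>a s. s \<notin> P \<and> y * \<psi> s = \<psi> a) \<and>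
     (\<forall>a. \<psi> a = 0 \<longleftrightarrow> (\<exists>s. s \<notin> P \<and> s * a \<in> K))"

text \<open>Polynomials over \<open>'a\<close> in the variables \<open>'v\<close> (a finite type, i.e. \<open>x_1,\<dots>,x_n\<close>):
  finitely supported maps from exponent vectors \<open>'v \<Rightarrow>\<^sub>0 nat\<close> to coefficients.
  The exponent \<open>E\<close> stands for the monomial \<open>x^E\<close>; \<open>x^E x^F = x^(E+F)\<close>.\<close>
type_synonym ('v, 'a) mpoly = "('v \<Rightarrow>\<^sub>0 nat) \<Rightarrow>\<^sub>0 'a"

text \<open>A monomial order, given as the strict order \<open>ord F E\<close> meaning \<open>x^F < x^E\<close>.\<close>
definition monomial_order :: "(('v \<Rightarrow>\<^sub>0 nat) \<Rightarrow> ('v \<Rightarrow>\<^sub>0 nat) \<Rightarrow> bool) \<Rightarrow> bool" where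
  "monomial_order ord \<longleftrightarrow>
     (\<forall>E. \<not> ord E E) \<and>
     (\<forall>E F G. ord E F \<longrightarrow> ord F G \<longrightarrow> ord E G) \<and>
     (\<forall>E F. E \<noteq> F \<longrightarrow> ord E F \<or> ord F E) \<and>
     (\<forall>E F G. ord F E \<longrightarrow> ord (G + F) (G + E)) \<and>
     (\<forall>i. ord 0 (Poly_Mapping.single i 1))"

definition lead_exp :: "(('v \<Rightarrow>\<^sub>0 nat) \<Rightarrow> ('v \<Rightarrow>\<^sub>0 nat) \<Rightarrow> bool) \<Rightarrow> ('v, 'a::zero) mpoly \<Rightarrow> 'v \<Rightarrow>\<^sub>0 nat" where
  "lead_exp ord f = (THE E. E \<in> Poly_Mapping.keys f \<and> (\<forall>F\<in>Poly_Mapping.keys f. F \<noteq> E \<longrightarrow> ord F E))"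

definition init_term :: "(('v \<Rightarrow>\<^sub>0 nat) \<Rightarrow> ('v \<Rightarrow>\<^sub>0 nat) \<Rightarrow> bool) \<Rightarrow> ('v, 'a::zero) mpoly \<Rightarrow> ('v, 'a) mpoly" where
  "init_term ord f = Poly_Mapping.single (lead_exp ord f) (Poly_Mapping.lookup f (lead_exp ord f))"

definition init_ideal :: "(('v \<Rightarrow>\<^sub>0 nat) \<Rightarrow> ('v \<Rightarrow>\<^sub>0 nat) \<Rightarrow> bool) \<Rightarrow> ('v, 'a::comm_ring_1) mpoly set \<Rightarrow> ('v, 'a) mpoly set" where
  "init_ideal ord I = ideal_gen {init_term ord f | f. f \<in> I \<and> f \<noteq> 0}"

definition coeff_ideal :: "('v, 'a::comm_ring_1) mpoly set \<Rightarrow> ('v \<Rightarrow>\<^sub>0 nat) \<Rightarrow> 'a set" where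
  "coeff_ideal J E = ideal_gen {c. Poly_Mapping.single E c \<in> J}"

text \<open>Contraction \<open>I \<inter> A\<close> (constants lying in \<open>I\<close>).\<close>
definition contract :: "('v, 'a::comm_ring_1) mpoly set \<Rightarrow> 'a set" where
  "contract I = {c. Poly_Mapping.single 0 c \<in> I}"

end

theory Submission
  imports Defs Complex_Main
begin

(*
  One inclusion holds for any ring homomorphism: the image of an initial term in(f) is either zero
  or the initial term of the image of f.

  For the other, every g in I k(p)[x] is, up to a unit of k(p), the image of some f in I, so it
  suffices to find c outside p with c x^E in in(I), where x^E is the initial monomial of the image
  of f. The coefficient ideal in(I)_F consists of the coefficients of x^F in elements of I without
  terms above x^F. We descend on the leading exponent F of f. If the leading coefficient d of f lies
  outside p, then E = F and c = d. Otherwise the hypothesis on in(I)_F B produces c outside p and h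
  in I with leading part c d x^F and zero image: if in(I)_F B = 0, then s d is a constant of I for
  some s outside p, and h = s d x^F; if in(I)_F B = (1), then in(I)_F is not contained in p (pB is a
  proper ideal when all constants of I lie in p, and otherwise such a constant will do), and
  h = d h' for some h' in I with leading part c x^F. Then c f - h has the image of f times the unit
  image of c, and a smaller leading exponent. Monomial orders are well-founded by Dickson's lemma,
  so the descent terminates.
*)

lemma is_idealI:
  assumes "0 \<in> J" "\<And>x y. x \<in> J \<Longrightarrow> y \<in> J \<Longrightarrow> x + y \<in> J" "\<And>r x. x \<in> J \<Longrightarrow> r * x \<in> J"
  shows "is_ideal J"
  using assms unfolding is_ideal_def by blast

lemma is_ideal_zero: "is_ideal J \<Longrightarrow> 0 \<in> J"
  unfolding is_ideal_def by blast

lemma is_ideal_add: "is_ideal J \<Longrightarrow> x \<in> J \<Longrightarrow> y \<in> J \<Longrightarrow> x + y \<in> J"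
  unfolding is_ideal_def by blast

lemma is_ideal_mult: "is_ideal J \<Longrightarrow> x \<in> J \<Longrightarrow> r * x \<in> J"
  unfolding is_ideal_def by blast

lemma is_ideal_diff:
  fixes J :: "'a::comm_ring_1 set"
  assumes "is_ideal J" "x \<in> J" "y \<in> J"
  shows "x - y \<in> J"
  using is_ideal_add[OF assms(1,2) is_ideal_mult[OF assms(1,3), of "-1"]] by simp

lemma is_ideal_ideal_gen: "is_ideal (ideal_gen S)"
  unfolding ideal_gen_def is_ideal_def by auto

lemma ideal_gen_superset: "S \<subseteq> ideal_gen S"
  unfolding ideal_gen_def by auto

lemma ideal_gen_minimal: "is_ideal J \<Longrightarrow> S \<subseteq> J \<Longrightarrow> ideal_gen S \<subseteq> J"
  unfolding ideal_gen_def by auto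

lemma ideal_gen_ideal: "is_ideal J \<Longrightarrow> ideal_gen J = J"
  using ideal_gen_minimal ideal_gen_superset by blast

lemma ideal_gen_image_subset:
  fixes h :: "'a::comm_ring \<Rightarrow> 'b::comm_ring"
  assumes add: "\<And>x y. h (x + y) = h x + h y" and mult: "\<And>x y. h (x * y) = h x * h y"
    and "is_ideal T" "h ` S \<subseteq> T"
  shows "h ` ideal_gen S \<subseteq> T"
proof -
  have "h 0 = 0"
    using add[of 0 0] by simp
  then have "is_ideal {x. h x \<in> T}"
    using \<open>is_ideal T\<close> by (intro is_idealI) (simp_all add: add mult is_ideal_zero is_ideal_add is_ideal_mult)
  with \<open>h ` S \<subseteq> T\<close> have "ideal_gen S \<subseteq> {x. h x \<in> T}"
    by (intro ideal_gen_minimal) auto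
  then show ?thesis by blast
qed

lemma prime_ideal_mult_notin: "prime_ideal P \<Longrightarrow> s \<notin> P \<Longrightarrow> t \<notin> P \<Longrightarrow> s * t \<notin> P"
  unfolding prime_ideal_def by blast

context
  fixes P K :: "'a::comm_ring_1 set" and \<psi> :: "'a \<Rightarrow> 'b::comm_ring"
  assumes loc_quot: "is_loc_quot P K \<psi>"
begin

lemma loc_quot_add: "\<psi> (a + b) = \<psi> a + \<psi> b"
  using loc_quot unfolding is_loc_quot_def by blast

lemma loc_quot_mult: "\<psi> (a * b) = \<psi> a * \<psi> b"
  using loc_quot unfolding is_loc_quot_def by blast

lemma loc_quot_one_mult: "\<psi> 1 * y = y"
  using loc_quot unfolding is_loc_quot_def by blast

lemma loc_quot_fraction: "\<exists>a s. s \<notin> P \<and> y * \<psi> s = \<psi> a"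
  using loc_quot unfolding is_loc_quot_def by blast

lemma loc_quot_eq_0_iff: "\<psi> a = 0 \<longleftrightarrow> (\<exists>s. s \<notin> P \<and> s * a \<in> K)"
  using loc_quot unfolding is_loc_quot_def by blast

lemma loc_quot_zero: "\<psi> 0 = 0"
  using loc_quot_add[of 0 0] by simp

end

text \<open>The extension \<open>P B\<close> of \<open>P\<close> to \<open>B = A\<^sub>P / K\<^sub>P\<close>, i.e. the fractions \<open>a / s\<close> with \<open>a \<in> P\<close>.\<close>
definition extension_ideal :: "'a::comm_ring_1 set \<Rightarrow> ('a \<Rightarrow> 'b::comm_ring) \<Rightarrow> 'b set" where
  "extension_ideal P \<psi> = {y. \<exists>a s. a \<in> P \<and> s \<notin> P \<and> y * \<psi> s = \<psi> a}"

lemma is_ideal_extension_ideal: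
  assumes loc_quot: "is_loc_quot P K \<psi>" and P: "prime_ideal P"
  shows "is_ideal (extension_ideal P \<psi>)"
proof (rule is_idealI)
  have "0 \<in> P" "1 \<notin> P"
    using P unfolding prime_ideal_def by (auto intro: is_ideal_zero)
  then show "0 \<in> extension_ideal P \<psi>"
    unfolding extension_ideal_def using loc_quot_zero[OF loc_quot] by force
next
  fix x y assume "x \<in> extension_ideal P \<psi>" "y \<in> extension_ideal P \<psi>"
  then obtain a s b t where x: "a \<in> P" "s \<notin> P" "x * \<psi> s = \<psi> a" and y: "b \<in> P" "t \<notin> P" "y * \<psi> t = \<psi> b"
    unfolding extension_ideal_def by blast
  have "(x + y) * \<psi> (s * t) = (x * \<psi> s) * \<psi> t + (y * \<psi> t) * \<psi> s"
    by (simp add: loc_quot_mult[OF loc_quot] algebra_simps)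
  also have "\<dots> = \<psi> (a * t + b * s)"
    by (simp add: x y loc_quot_add[OF loc_quot] loc_quot_mult[OF loc_quot])
  finally have "(x + y) * \<psi> (s * t) = \<psi> (a * t + b * s)" .
  moreover have "a * t + b * s \<in> P"
    using P x(1) y(1) unfolding prime_ideal_def by (metis is_ideal_add is_ideal_mult mult.commute)
  ultimately show "x + y \<in> extension_ideal P \<psi>"
    unfolding extension_ideal_def using prime_ideal_mult_notin[OF P x(2) y(2)] by blast
next
  fix r x assume "x \<in> extension_ideal P \<psi>"
  then obtain a s where x: "a \<in> P" "s \<notin> P" "x * \<psi> s = \<psi> a"
    unfolding extension_ideal_def by blast
  obtain b t where r: "t \<notin> P" "r * \<psi> t = \<psi> b"
    using loc_quot_fraction[OF loc_quot] by blast
  have "(r * x) * \<psi> (t * s) = (r * \<psi> t) * (x * \<psi> s)"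
    by (simp add: loc_quot_mult[OF loc_quot] algebra_simps)
  also have "\<dots> = \<psi> (b * a)"
    by (simp add: x r loc_quot_mult[OF loc_quot])
  finally have "(r * x) * \<psi> (t * s) = \<psi> (b * a)" .
  moreover have "b * a \<in> P"
    using P x(1) unfolding prime_ideal_def by (blast intro: is_ideal_mult)
  ultimately show "r * x \<in> extension_ideal P \<psi>"
    unfolding extension_ideal_def using prime_ideal_mult_notin[OF P r(1) x(2)] by blast
qed

lemma one_notin_extension_ideal:
  assumes loc_quot: "is_loc_quot P K \<psi>" and P: "prime_ideal P" and "K \<subseteq> P"
  shows "\<psi> 1 \<notin> extension_ideal P \<psi>"
proof
  assume "\<psi> 1 \<in> extension_ideal P \<psi>"
  then obtain a s where as: "a \<in> P" "s \<notin> P" "\<psi> 1 * \<psi> s = \<psi> a"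
    unfolding extension_ideal_def by blast
  then have "\<psi> (s - a) = 0"
    using loc_quot_add[OF loc_quot, of "s - a" a] loc_quot_one_mult[OF loc_quot] by simp
  then obtain t where "t \<notin> P" "t * (s - a) \<in> P"
    using loc_quot_eq_0_iff[OF loc_quot] \<open>K \<subseteq> P\<close> by blast
  then have "(s - a) + a \<in> P"
    using P as(1) unfolding prime_ideal_def by (blast intro: is_ideal_add)
  with as(2) show False by simp
qed

lemma loc_quot_unit_ideal_not_subset:
  assumes loc_quot: "is_loc_quot P K \<psi>" and P: "prime_ideal P" and "K \<subseteq> P"
    and unit: "ideal_gen (\<psi> ` J) = UNIV"
  shows "\<not> J \<subseteq> P"
proof
  assume "J \<subseteq> P"
  have "\<psi> c \<in> extension_ideal P \<psi>" if "c \<in> J" for c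
  proof -
    have "\<psi> c * \<psi> 1 = \<psi> c"
      using loc_quot_one_mult[OF loc_quot] by (metis mult.commute)
    moreover have "1 \<notin> P"
      using P unfolding prime_ideal_def by blast
    ultimately show ?thesis
      unfolding extension_ideal_def using that \<open>J \<subseteq> P\<close> by blast
  qed
  then have "ideal_gen (\<psi> ` J) \<subseteq> extension_ideal P \<psi>"
    by (intro ideal_gen_minimal[OF is_ideal_extension_ideal[OF loc_quot P]]) blast
  with unit one_notin_extension_ideal[OF loc_quot P \<open>K \<subseteq> P\<close>] show False
    by blast
qed

lemma poly_mapping_induct [case_names zero add]:
  assumes "P 0"
    and "\<And>f a b. P f \<Longrightarrow> a \<notin> Poly_Mapping.keys f \<Longrightarrow> b \<noteq> 0 \<Longrightarrow> P (f + Poly_Mapping.single a b)"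
  shows "P f"
proof (induction f rule: update_induct)
  case const
  show ?case by (fact assms(1))
next
  case (update f a b)
  have "Poly_Mapping.update a b f = f + Poly_Mapping.single a b"
    using update.hyps(1)
    by (intro poly_mapping_eqI) (auto simp: lookup_update lookup_add lookup_single in_keys_iff)
  with update assms(2) show ?case by simp
qed

lemma lookup_map: "g 0 = 0 \<Longrightarrow> Poly_Mapping.lookup (Poly_Mapping.map g f) k = g (Poly_Mapping.lookup f k)"
  by (simp add: Poly_Mapping.map.rep_eq when_def)

lemma keys_map_subset: "g 0 = 0 \<Longrightarrow> Poly_Mapping.keys (Poly_Mapping.map g f) \<subseteq> Poly_Mapping.keys f"
  by (auto simp: in_keys_iff lookup_map)

lemma lookup_const_mult:
  fixes f :: "'m::monoid_add \<Rightarrow>\<^sub>0 'a::semiring_0"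
  shows "Poly_Mapping.lookup (Poly_Mapping.single 0 c * f) k = c * Poly_Mapping.lookup f k"
  by (simp add: mult_map_scale_conv_mult[symmetric] lookup_map)

lemma keys_const_mult_subset:
  fixes f :: "'m::monoid_add \<Rightarrow>\<^sub>0 'a::semiring_0"
  shows "Poly_Mapping.keys (Poly_Mapping.single 0 c * f) \<subseteq> Poly_Mapping.keys f"
  by (auto simp: in_keys_iff lookup_const_mult)

lemma keys_const_mult:
  fixes f :: "'m::monoid_add \<Rightarrow>\<^sub>0 'a::semiring_no_zero_divisors"
  shows "c \<noteq> 0 \<Longrightarrow> Poly_Mapping.keys (Poly_Mapping.single 0 c * f) = Poly_Mapping.keys f"
  by (auto simp: in_keys_iff lookup_const_mult)

lemma lookup_single_mult:
  fixes h :: "'m::cancel_comm_monoid_add \<Rightarrow>\<^sub>0 'a::semiring_0"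
  shows "Poly_Mapping.lookup (Poly_Mapping.single A a * h) (A + B) = a * Poly_Mapping.lookup h B"
proof (induction h rule: poly_mapping_induct)
  case zero
  show ?case by simp
next
  case (add h C c)
  have "Poly_Mapping.lookup (Poly_Mapping.single (A + C) (a * c)) (A + B)
      = a * Poly_Mapping.lookup (Poly_Mapping.single C c) B"
    by (cases "C = B") (auto simp: lookup_single_not_eq)
  with add.IH show ?case
    by (simp add: distrib_left mult_single lookup_add)
qed

lemma keys_single_mult:
  fixes h :: "'m::comm_monoid_add \<Rightarrow>\<^sub>0 'a::semiring_0"
  shows "Poly_Mapping.keys (Poly_Mapping.single A a * h) \<subseteq> (+) A ` Poly_Mapping.keys h"
  using keys_mult[of "Poly_Mapping.single A a" h] by (auto split: if_splits)

locale unital_ring_hom =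
  fixes \<phi> :: "'a::comm_ring_1 \<Rightarrow> 'b::comm_ring_1"
  assumes hom_add: "\<phi> (a + b) = \<phi> a + \<phi> b"
    and hom_mult: "\<phi> (a * b) = \<phi> a * \<phi> b"
    and hom_one: "\<phi> 1 = 1"
begin

lemma hom_zero [simp]: "\<phi> 0 = 0"
  using hom_add[of 0 0] by simp

lemma hom_diff: "\<phi> (a - b) = \<phi> a - \<phi> b"
  using hom_add[of "a - b" b] by (simp add: algebra_simps)

lemma lookup_map_hom: "Poly_Mapping.lookup (Poly_Mapping.map \<phi> f) k = \<phi> (Poly_Mapping.lookup f k)"
  by (simp add: lookup_map)

lemma map_hom_zero [simp]: "Poly_Mapping.map \<phi> 0 = 0"
  by (rule poly_mapping_eqI) (simp add: lookup_map_hom)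

lemma map_hom_add: "Poly_Mapping.map \<phi> (f + g) = Poly_Mapping.map \<phi> f + Poly_Mapping.map \<phi> g"
  by (rule poly_mapping_eqI) (simp add: lookup_map_hom lookup_add hom_add)

lemma map_hom_diff: "Poly_Mapping.map \<phi> (f - g) = Poly_Mapping.map \<phi> f - Poly_Mapping.map \<phi> g"
  by (rule poly_mapping_eqI) (simp add: lookup_map_hom lookup_minus hom_diff)

lemma map_hom_single_mult:
  fixes g :: "'m::comm_monoid_add \<Rightarrow>\<^sub>0 'a"
  shows "Poly_Mapping.map \<phi> (Poly_Mapping.single A b * g) = Poly_Mapping.single A (\<phi> b) * Poly_Mapping.map \<phi> g"
proof (induction g rule: poly_mapping_induct)
  case zero
  show ?case by simp
next
  case (add g C c)
  then show ?case by (simp add: map_hom_add distrib_left mult_single hom_mult)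
qed

lemma map_hom_mult:
  fixes f g :: "'m::comm_monoid_add \<Rightarrow>\<^sub>0 'a"
  shows "Poly_Mapping.map \<phi> (f * g) = Poly_Mapping.map \<phi> f * Poly_Mapping.map \<phi> g"
proof (induction f rule: poly_mapping_induct)
  case zero
  show ?case by simp
next
  case (add f A a)
  then show ?case by (simp add: distrib_right map_hom_add map_hom_single_mult)
qed

end

section \<open>Monomial orders\<close>

lemma exists_mono_subseq:
  fixes s :: "nat \<Rightarrow> nat"
  shows "\<exists>g::nat \<Rightarrow> nat. strict_mono g \<and> (\<forall>i j. i \<le> j \<longrightarrow> s (g i) \<le> s (g j))"
proof -
  obtain f :: "nat \<Rightarrow> nat" where f: "strict_mono f" "monoseq (\<lambda>n. s (f n))"
    using seq_monosub by blast
  show ?thesis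
  proof (cases "\<forall>m n. m \<le> n \<longrightarrow> s (f m) \<le> s (f n)")
    case True
    with f(1) show ?thesis
      by blast
  next
    case False
    with f(2) have decreasing: "\<forall>m n. m \<le> n \<longrightarrow> s (f n) \<le> s (f m)"
      unfolding monoseq_def by blast
    obtain N where N: "\<forall>n. s (f N) \<le> s (f n)"
      using ex_has_least_nat[of "\<lambda>_. True" 0 "\<lambda>n. s (f n)"] by auto
    \<comment> \<open>a decreasing sequence of naturals is constant from its minimum on\<close>
    have "s (f (N + i)) \<le> s (f (N + j))" for i j
      using decreasing[rule_format, of N "N + i"] N[rule_format, of "N + j"] by simp
    moreover have "strict_mono (\<lambda>n. f (N + n))"
      using f(1) unfolding strict_mono_def by simp
    ultimately show ?thesis
      by blast
  qed
qed

lemma exists_pointwise_mono_subseq: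
  fixes h :: "nat \<Rightarrow> 'v \<Rightarrow> nat"
  assumes "finite V"
  shows "\<exists>g::nat \<Rightarrow> nat. strict_mono g \<and> (\<forall>i j. i \<le> j \<longrightarrow> (\<forall>v\<in>V. h (g i) v \<le> h (g j) v))"
  using assms
proof (induction V rule: finite_induct)
  case empty
  show ?case
    by (rule exI[of _ "\<lambda>n. n"]) (simp add: strict_mono_def)
next
  case (insert v V)
  then obtain g :: "nat \<Rightarrow> nat" where g: "strict_mono g" "\<forall>i j. i \<le> j \<longrightarrow> (\<forall>w\<in>V. h (g i) w \<le> h (g j) w)"
    by blast
  obtain g' :: "nat \<Rightarrow> nat" where g': "strict_mono g'" "\<forall>i j. i \<le> j \<longrightarrow> h (g (g' i)) v \<le> h (g (g' j)) v"
    using exists_mono_subseq[of "\<lambda>n. h (g n) v"] by blast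
  have "strict_mono (\<lambda>n. g (g' n))"
    using g(1) g'(1) by (simp add: strict_mono_def)
  moreover have "h (g (g' i)) w \<le> h (g (g' j)) w" if "i \<le> j" "w \<in> insert v V" for i j w
    using that g(2) g'(2) strict_mono_less_eq[OF g'(1)] by auto
  ultimately show ?case
    by blast
qed

lemma dickson:
  fixes f :: "nat \<Rightarrow> ('v::finite \<Rightarrow>\<^sub>0 nat)"
  shows "\<exists>i j. i < j \<and> (\<forall>v. Poly_Mapping.lookup (f i) v \<le> Poly_Mapping.lookup (f j) v)"
proof -
  obtain g :: "nat \<Rightarrow> nat" where g: "strict_mono g"
    "\<forall>i j. i \<le> j \<longrightarrow> (\<forall>v\<in>UNIV. Poly_Mapping.lookup (f (g i)) v \<le> Poly_Mapping.lookup (f (g j)) v)"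
    using exists_pointwise_mono_subseq[OF finite_UNIV, of "\<lambda>n. Poly_Mapping.lookup (f n)"] by blast
  then have "g 0 < g 1"
    by (simp add: strict_mono_def)
  with g(2) show ?thesis by blast
qed

lemma lead_exp_keys_cong: "Poly_Mapping.keys f = Poly_Mapping.keys g \<Longrightarrow> lead_exp ord f = lead_exp ord g"
  unfolding lead_exp_def by simp

locale monomial_ordering =
  fixes ord :: "('v \<Rightarrow>\<^sub>0 nat) \<Rightarrow> ('v \<Rightarrow>\<^sub>0 nat) \<Rightarrow> bool"
  assumes monomial_order: "monomial_order ord"
begin

lemma ord_irrefl: "\<not> ord E E"
  using monomial_order unfolding monomial_order_def by blast

lemma ord_trans: "ord E F \<Longrightarrow> ord F G \<Longrightarrow> ord E G"
  using monomial_order unfolding monomial_order_def by blast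

lemma ord_total: "E \<noteq> F \<Longrightarrow> ord E F \<or> ord F E"
  using monomial_order unfolding monomial_order_def by blast

lemma ord_add_left: "ord F E \<Longrightarrow> ord (G + F) (G + E)"
  using monomial_order unfolding monomial_order_def by blast

lemma ord_zero_single: "ord 0 (Poly_Mapping.single i 1)"
  using monomial_order unfolding monomial_order_def by blast

lemma ord_asym: "ord E F \<Longrightarrow> \<not> ord F E"
  using ord_trans ord_irrefl by blast

lemma ord_zero: "G \<noteq> 0 \<Longrightarrow> ord 0 G"
proof -
  have sum_pos: "ord 0 (A + B)" if "ord 0 A" "ord 0 B" for A B
    using ord_add_left[OF that(2), of A] that(1) ord_trans by simp
  have single: "ord 0 (Poly_Mapping.single i (Suc n))" for i n
  proof (induction n)
    case 0
    show ?case using ord_zero_single by simp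
  next
    case (Suc n)
    have "Poly_Mapping.single i (Suc (Suc n)) = Poly_Mapping.single i (Suc n) + Poly_Mapping.single i 1"
      by (simp add: single_add[symmetric])
    with sum_pos[OF Suc ord_zero_single] show ?case by simp
  qed
  show "G \<noteq> 0 \<Longrightarrow> ord 0 G"
  proof (induction G rule: poly_mapping_induct)
    case zero
    then show ?case by simp
  next
    case (add f i n)
    then obtain m where "n = Suc m"
      using not0_implies_Suc by blast
    with add.IH single[of i m] sum_pos show ?case
      by (cases "f = 0") simp_all
  qed
qed

lemma ord_add_self: "H \<noteq> 0 \<Longrightarrow> ord F (F + H)"
  using ord_add_left[OF ord_zero, of H F] by simp

lemma exists_ord_greatest:
  assumes "finite K" "K \<noteq> {}"
  shows "\<exists>E\<in>K. \<forall>F\<in>K. F \<noteq> E \<longrightarrow> ord F E"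
  using assms
proof (induction K rule: finite_ne_induct)
  case (singleton E)
  show ?case by simp
next
  case (insert E K)
  then obtain M where M: "M \<in> K" "\<forall>F\<in>K. F \<noteq> M \<longrightarrow> ord F M"
    by blast
  show ?case
  proof (cases "ord E M")
    case True
    with M show ?thesis by auto
  next
    case False
    have "M \<noteq> E"
      using M(1) \<open>E \<notin> K\<close> by blast
    with False have "ord M E"
      using ord_total by blast
    have "ord F E" if "F \<in> K" for F
      using M(2) \<open>ord M E\<close> ord_trans that by (cases "F = M") auto
    then show ?thesis by blast
  qed
qed

lemma lead_exp_greatest:
  assumes "f \<noteq> 0"
  shows "lead_exp ord f \<in> Poly_Mapping.keys f"
    and "G \<in> Poly_Mapping.keys f \<Longrightarrow> G \<noteq> lead_exp ord f \<Longrightarrow> ord G (lead_exp ord f)"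
proof -
  obtain E where E: "E \<in> Poly_Mapping.keys f" "\<forall>F\<in>Poly_Mapping.keys f. F \<noteq> E \<longrightarrow> ord F E"
    using exists_ord_greatest[of "Poly_Mapping.keys f"] assms by auto
  have "\<exists>!E. E \<in> Poly_Mapping.keys f \<and> (\<forall>F\<in>Poly_Mapping.keys f. F \<noteq> E \<longrightarrow> ord F E)"
  proof (rule ex1I[of _ E])
    fix E' assume E': "E' \<in> Poly_Mapping.keys f \<and> (\<forall>F\<in>Poly_Mapping.keys f. F \<noteq> E' \<longrightarrow> ord F E')"
    show "E' = E"
    proof (rule ccontr)
      assume "E' \<noteq> E"
      with E E' have "ord E' E" "ord E E'"
        by auto
      then show False
        using ord_asym by blast
    qed
  qed (use E in blast)
  then have "lead_exp ord f \<in> Poly_Mapping.keys f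
      \<and> (\<forall>F\<in>Poly_Mapping.keys f. F \<noteq> lead_exp ord f \<longrightarrow> ord F (lead_exp ord f))"
    unfolding lead_exp_def by (rule theI')
  then show "lead_exp ord f \<in> Poly_Mapping.keys f"
    and "G \<in> Poly_Mapping.keys f \<Longrightarrow> G \<noteq> lead_exp ord f \<Longrightarrow> ord G (lead_exp ord f)"
    by blast+
qed

lemma lead_exp_eqI:
  assumes "E \<in> Poly_Mapping.keys f" "\<And>F. F \<in> Poly_Mapping.keys f \<Longrightarrow> F \<noteq> E \<Longrightarrow> ord F E"
  shows "lead_exp ord f = E"
proof -
  have "f \<noteq> 0"
    using assms(1) by auto
  then show ?thesis
    using lead_exp_greatest[of f] assms ord_asym by blast
qed

lemma lead_exp_map:
  assumes "g 0 = 0" "g (Poly_Mapping.lookup f (lead_exp ord f)) \<noteq> 0"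
  shows "lead_exp ord (Poly_Mapping.map g f) = lead_exp ord f"
proof (rule lead_exp_eqI)
  have "f \<noteq> 0"
    using assms by auto
  show "lead_exp ord f \<in> Poly_Mapping.keys (Poly_Mapping.map g f)"
    using assms by (simp add: in_keys_iff lookup_map)
  show "ord F (lead_exp ord f)" if "F \<in> Poly_Mapping.keys (Poly_Mapping.map g f)" "F \<noteq> lead_exp ord f" for F
    using that keys_map_subset[of g f] assms(1) lead_exp_greatest(2)[OF \<open>f \<noteq> 0\<close>] by blast
qed

lemma init_term_map:
  assumes "g 0 = 0" "g (Poly_Mapping.lookup f (lead_exp ord f)) \<noteq> 0"
  shows "init_term ord (Poly_Mapping.map g f) = Poly_Mapping.map g (init_term ord f)"
  using assms by (simp add: init_term_def lead_exp_map lookup_map)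

lemma lead_exp_diff_less:
  fixes f g :: "('v \<Rightarrow>\<^sub>0 nat) \<Rightarrow>\<^sub>0 'a::ab_group_add"
  assumes "\<forall>G\<in>Poly_Mapping.keys f. G = F \<or> ord G F" "\<forall>G\<in>Poly_Mapping.keys g. G = F \<or> ord G F"
    and "Poly_Mapping.lookup f F = Poly_Mapping.lookup g F" "f \<noteq> g"
  shows "ord (lead_exp ord (f - g)) F"
proof -
  let ?E = "lead_exp ord (f - g)"
  have "?E \<in> Poly_Mapping.keys (f - g)"
    using assms(4) lead_exp_greatest(1)[of "f - g"] by simp
  moreover have "F \<notin> Poly_Mapping.keys (f - g)"
    using assms(3) by (simp add: in_keys_iff lookup_minus)
  ultimately show ?thesis
    using keys_diff[of f g] assms(1,2) by fastforce
qed

end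

lemma wf_monomial_order:
  fixes ord :: "('v::finite \<Rightarrow>\<^sub>0 nat) \<Rightarrow> ('v \<Rightarrow>\<^sub>0 nat) \<Rightarrow> bool"
  assumes "monomial_order ord"
  shows "wf {(F, E). ord F E}"
  unfolding wf_iff_no_infinite_down_chain
proof
  interpret monomial_ordering ord
    by (fact monomial_ordering.intro[OF assms])
  assume "\<exists>f. \<forall>i. (f (Suc i), f i) \<in> {(F, E). ord F E}"
  then obtain f where f: "\<And>i. ord (f (Suc i)) (f i)"
    by auto
  have descending: "ord (f j) (f i)" if "i < j" for i j
    using that
  proof (induction j)
    case 0
    then show ?case by simp
  next
    case (Suc j)
    then show ?case
      using f[of j] ord_trans by (cases "i = j") auto
  qed
  obtain i j where ij: "i < j" "\<And>v. Poly_Mapping.lookup (f i) v \<le> Poly_Mapping.lookup (f j) v"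
    using dickson[of f] by blast
  \<comment> \<open>\<open>f i\<close> divides \<open>f j\<close>, so \<open>f j\<close> cannot be smaller\<close>
  have "f j = f i + (f j - f i)"
    by (rule poly_mapping_eqI) (simp add: lookup_add lookup_minus ij(2))
  then have "f j = f i \<or> ord (f i) (f j)"
    using ord_add_self[of "f j - f i" "f i"] by (cases "f j - f i = 0") auto
  then show False
  proof
    assume "f j = f i"
    with descending[OF ij(1)] show False
      using ord_irrefl by simp
  next
    assume "ord (f i) (f j)"
    with descending[OF ij(1)] show False
      using ord_asym by blast
  qed
qed

section \<open>Initial ideals and their coefficient ideals\<close>

definition lead_coeffs ::
  "(('v \<Rightarrow>\<^sub>0 nat) \<Rightarrow> ('v \<Rightarrow>\<^sub>0 nat) \<Rightarrow> bool) \<Rightarrow> ('v, 'a::comm_ring_1) mpoly set \<Rightarrow> ('v \<Rightarrow>\<^sub>0 nat) \<Rightarrow> 'a set"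
where
  "lead_coeffs ord I F = {Poly_Mapping.lookup h F | h. h \<in> I \<and> (\<forall>G\<in>Poly_Mapping.keys h. G = F \<or> ord G F)}"

lemma lead_coeffsI:
  "h \<in> I \<Longrightarrow> \<forall>G\<in>Poly_Mapping.keys h. G = F \<or> ord G F \<Longrightarrow> Poly_Mapping.lookup h F \<in> lead_coeffs ord I F"
  unfolding lead_coeffs_def by blast

lemma is_ideal_lead_coeffs:
  assumes I: "is_ideal I"
  shows "is_ideal (lead_coeffs ord I F)"
proof (rule is_idealI)
  show "0 \<in> lead_coeffs ord I F"
    using lead_coeffsI[OF is_ideal_zero[OF I]] by simp
next
  fix x y assume "x \<in> lead_coeffs ord I F" "y \<in> lead_coeffs ord I F"
  then obtain g h where "g \<in> I" "\<forall>G\<in>Poly_Mapping.keys g. G = F \<or> ord G F" "x = Poly_Mapping.lookup g F"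
    and "h \<in> I" "\<forall>G\<in>Poly_Mapping.keys h. G = F \<or> ord G F" "y = Poly_Mapping.lookup h F"
    unfolding lead_coeffs_def by blast
  then have "Poly_Mapping.lookup (g + h) F \<in> lead_coeffs ord I F"
    using keys_add[of g h] is_ideal_add[OF I] by (intro lead_coeffsI) blast+
  then show "x + y \<in> lead_coeffs ord I F"
    by (simp add: lookup_add \<open>x = _\<close> \<open>y = _\<close>)
next
  fix r x assume "x \<in> lead_coeffs ord I F"
  then obtain h where "h \<in> I" "\<forall>G\<in>Poly_Mapping.keys h. G = F \<or> ord G F" "x = Poly_Mapping.lookup h F"
    unfolding lead_coeffs_def by blast
  then have "Poly_Mapping.lookup (Poly_Mapping.single 0 r * h) F \<in> lead_coeffs ord I F"
    using keys_const_mult_subset[of r h] is_ideal_mult[OF I] by (intro lead_coeffsI) blast+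
  then show "r * x \<in> lead_coeffs ord I F"
    by (simp add: lookup_const_mult \<open>x = _\<close>)
qed

lemma single_in_ideal_of_const:
  fixes I :: "('v, 'a::comm_ring_1) mpoly set"
  assumes I: "is_ideal I" and "Poly_Mapping.single 0 k \<in> I"
  shows "Poly_Mapping.single F k \<in> I"
proof -
  have "Poly_Mapping.single F k = Poly_Mapping.single F 1 * Poly_Mapping.single 0 k"
    by (simp add: mult_single)
  with assms show ?thesis
    by (simp add: is_ideal_mult)
qed

lemma const_in_lead_coeffs:
  assumes "is_ideal I" "Poly_Mapping.single 0 k \<in> I"
  shows "k \<in> lead_coeffs ord I F"
  using lead_coeffsI[OF single_in_ideal_of_const[OF assms, of F], of F ord] by simp

lemma init_term_in_init_ideal:
  assumes "f \<in> I" "f \<noteq> 0"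
  shows "init_term ord f \<in> init_ideal ord I"
proof -
  from assms have "init_term ord f \<in> {init_term ord f | f. f \<in> I \<and> f \<noteq> 0}"
    by blast
  then show ?thesis
    unfolding init_ideal_def using ideal_gen_superset by (rule subsetD[rotated])
qed

lemma coeff_ideal_eq:
  fixes J :: "('v, 'a::comm_ring_1) mpoly set"
  assumes J: "is_ideal J"
  shows "coeff_ideal J E = {c. Poly_Mapping.single E c \<in> J}"
proof -
  have "is_ideal {c. Poly_Mapping.single E c \<in> J}"
  proof (rule is_idealI)
    fix r c assume "c \<in> {c. Poly_Mapping.single E c \<in> J}"
    moreover have "Poly_Mapping.single E (r * c) = Poly_Mapping.single 0 r * Poly_Mapping.single E c"
      by (simp add: mult_single)
    ultimately show "r * c \<in> {c. Poly_Mapping.single E c \<in> J}"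
      using is_ideal_mult[OF J] by simp
  qed (use J in \<open>simp_all add: is_ideal_zero is_ideal_add single_add\<close>)
  then show ?thesis
    unfolding coeff_ideal_def by (rule ideal_gen_ideal)
qed

context monomial_ordering
begin

lemma lead_coeffs_shift:
  assumes I: "is_ideal I" and "b \<in> lead_coeffs ord I B"
  shows "a * b \<in> lead_coeffs ord I (A + B)"
proof -
  obtain h where h: "h \<in> I" "\<forall>G\<in>Poly_Mapping.keys h. G = B \<or> ord G B" "b = Poly_Mapping.lookup h B"
    using assms(2) unfolding lead_coeffs_def by blast
  have "\<forall>G\<in>Poly_Mapping.keys (Poly_Mapping.single A a * h). G = A + B \<or> ord G (A + B)"
    using keys_single_mult[of A a h] h(2) ord_add_left by fastforce
  moreover have "Poly_Mapping.single A a * h \<in> I"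
    using I h(1) by (simp add: is_ideal_mult)
  ultimately show ?thesis
    using lead_coeffsI h(3) by (fastforce simp: lookup_single_mult)
qed

lemma is_ideal_coeffwise_lead_coeffs:
  assumes I: "is_ideal I"
  shows "is_ideal {q. \<forall>G. Poly_Mapping.lookup q G \<in> lead_coeffs ord I G}" (is "is_ideal ?Q")
proof -
  have Q_zero: "0 \<in> ?Q"
    using is_ideal_zero[OF is_ideal_lead_coeffs[OF I]] by simp
  have Q_add: "q + q' \<in> ?Q" if "q \<in> ?Q" "q' \<in> ?Q" for q q'
    using that is_ideal_add[OF is_ideal_lead_coeffs[OF I]] by (simp add: lookup_add)
  have Q_single_mult: "Poly_Mapping.single A a * q \<in> ?Q" if "q \<in> ?Q" for A a q
  proof (intro CollectI allI)
    fix G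
    show "Poly_Mapping.lookup (Poly_Mapping.single A a * q) G \<in> lead_coeffs ord I G"
    proof (cases "G \<in> Poly_Mapping.keys (Poly_Mapping.single A a * q)")
      case True
      then obtain B where "G = A + B"
        using keys_single_mult by blast
      with that show ?thesis
        using lead_coeffs_shift[OF I] by (simp add: lookup_single_mult)
    next
      case False
      then show ?thesis
        using Q_zero by (simp add: in_keys_iff)
    qed
  qed
  have "r * q \<in> ?Q" if "q \<in> ?Q" for r q
  proof (induction r rule: poly_mapping_induct)
    case zero
    show ?case using Q_zero by simp
  next
    case (add r A a)
    then show ?case
      using Q_add Q_single_mult[OF that] by (simp add: distrib_right)
  qed
  with Q_zero Q_add show ?thesis
    by (intro is_idealI) blast+
qed

lemma init_ideal_coeffs:
  assumes I: "is_ideal I" and "q \<in> init_ideal ord I"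
  shows "Poly_Mapping.lookup q G \<in> lead_coeffs ord I G"
proof -
  let ?Q = "{q. \<forall>G. Poly_Mapping.lookup q G \<in> lead_coeffs ord I G}"
  have "init_term ord f \<in> ?Q" if "f \<in> I" "f \<noteq> 0" for f
  proof (intro CollectI allI)
    fix G
    have "Poly_Mapping.lookup f (lead_exp ord f) \<in> lead_coeffs ord I (lead_exp ord f)"
      using lead_coeffsI[OF that(1)] lead_exp_greatest(2)[OF that(2)] by blast
    then show "Poly_Mapping.lookup (init_term ord f) G \<in> lead_coeffs ord I G"
      using is_ideal_zero[OF is_ideal_lead_coeffs[OF I]]
      by (cases "G = lead_exp ord f") (simp_all add: init_term_def lookup_single_not_eq)
  qed
  then have "init_ideal ord I \<subseteq> ?Q"
    unfolding init_ideal_def by (intro ideal_gen_minimal[OF is_ideal_coeffwise_lead_coeffs[OF I]]) blast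
  with assms(2) show ?thesis by blast
qed

lemma single_in_init_ideal_iff:
  assumes I: "is_ideal I"
  shows "Poly_Mapping.single F c \<in> init_ideal ord I \<longleftrightarrow> c \<in> lead_coeffs ord I F"
proof
  assume "Poly_Mapping.single F c \<in> init_ideal ord I"
  from init_ideal_coeffs[OF I this, of F] show "c \<in> lead_coeffs ord I F" by simp
next
  assume "c \<in> lead_coeffs ord I F"
  then obtain h where h: "h \<in> I" "\<forall>G\<in>Poly_Mapping.keys h. G = F \<or> ord G F" "c = Poly_Mapping.lookup h F"
    unfolding lead_coeffs_def by blast
  show "Poly_Mapping.single F c \<in> init_ideal ord I"
  proof (cases "c = 0")
    case True
    then show ?thesis
      unfolding init_ideal_def using is_ideal_zero[OF is_ideal_ideal_gen] by simp
  next
    case False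
    with h have "lead_exp ord h = F"
      by (intro lead_exp_eqI) (auto simp: in_keys_iff)
    moreover from False h have "h \<noteq> 0"
      by auto
    ultimately show ?thesis
      using init_term_in_init_ideal[OF h(1) \<open>h \<noteq> 0\<close>, where ord = ord] h(3)
      by (simp add: init_term_def)
  qed
qed

lemma coeff_ideal_init_ideal:
  assumes I: "is_ideal I"
  shows "coeff_ideal (init_ideal ord I) F = lead_coeffs ord I F"
proof -
  have "is_ideal (init_ideal ord I)"
    unfolding init_ideal_def by (rule is_ideal_ideal_gen)
  then show ?thesis
    by (simp add: coeff_ideal_eq single_in_init_ideal_iff[OF I])
qed

lemma init_ideal_map_subset:
  assumes "unital_ring_hom \<phi>"
  shows "ideal_gen (Poly_Mapping.map \<phi> ` init_ideal ord I)
    \<subseteq> init_ideal ord (ideal_gen (Poly_Mapping.map \<phi> ` I))" (is "_ \<subseteq> ?R")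
proof -
  interpret unital_ring_hom \<phi>
    by (fact assms)
  have R: "is_ideal ?R"
    unfolding init_ideal_def by (rule is_ideal_ideal_gen)
  have "Poly_Mapping.map \<phi> (init_term ord f) \<in> ?R" if "f \<in> I" "f \<noteq> 0" for f
  proof (cases "\<phi> (Poly_Mapping.lookup f (lead_exp ord f)) = 0")
    case True
    then show ?thesis
      using is_ideal_zero[OF R] by (simp add: init_term_def)
  next
    case False
    then have "Poly_Mapping.map \<phi> f \<noteq> 0"
      by (metis hom_zero lookup_map_hom lookup_zero)
    moreover have "Poly_Mapping.map \<phi> f \<in> ideal_gen (Poly_Mapping.map \<phi> ` I)"
      using ideal_gen_superset that(1) by blast
    ultimately show ?thesis
      using init_term_in_init_ideal init_term_map[OF hom_zero False] by metis
  qed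
  then have "Poly_Mapping.map \<phi> ` init_ideal ord I \<subseteq> ?R"
    unfolding init_ideal_def[of ord I]
    by (intro ideal_gen_image_subset[OF map_hom_add map_hom_mult R]) blast
  then show ?thesis
    by (rule ideal_gen_minimal[OF R])
qed

end

section \<open>Reduction to the residue field\<close>

locale residue_map =
  fixes p :: "'a::comm_ring_1 set" and \<phi> :: "'a \<Rightarrow> 'k::field"
  assumes prime: "prime_ideal p" and residue: "is_loc_quot p p \<phi>"
begin

lemma unital_ring_hom_residue: "unital_ring_hom \<phi>"
proof
  show "\<phi> (a + b) = \<phi> a + \<phi> b" "\<phi> (a * b) = \<phi> a * \<phi> b" for a b
    using loc_quot_add[OF residue] loc_quot_mult[OF residue] by blast+
  show "\<phi> 1 = 1"
    using loc_quot_one_mult[OF residue, of 1] by simp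
qed

sublocale unital_ring_hom \<phi>
  by (fact unital_ring_hom_residue)

lemma one_notin_prime: "1 \<notin> p"
  using prime unfolding prime_ideal_def by blast

lemma residue_eq_0_iff: "\<phi> a = 0 \<longleftrightarrow> a \<in> p"
proof
  assume "\<phi> a = 0"
  then obtain s where "s \<notin> p" "s * a \<in> p"
    using loc_quot_eq_0_iff[OF residue] by blast
  then show "a \<in> p"
    using prime unfolding prime_ideal_def by blast
next
  assume "a \<in> p"
  then show "\<phi> a = 0"
    using loc_quot_eq_0_iff[OF residue] one_notin_prime by force
qed

lemma const_mult_const:
  fixes g :: "'m::comm_monoid_add \<Rightarrow>\<^sub>0 'k"
  shows "Poly_Mapping.single 0 a * (Poly_Mapping.single 0 b * g) = Poly_Mapping.single 0 (a * b) * g"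
  by (simp add: mult.assoc[symmetric] mult_single)

lemma exists_denominator:
  fixes r :: "'m::comm_monoid_add \<Rightarrow>\<^sub>0 'k"
  shows "\<exists>r' t. t \<notin> p \<and> Poly_Mapping.map \<phi> r' = Poly_Mapping.single 0 (\<phi> t) * r"
proof (induction r rule: poly_mapping_induct)
  case zero
  show ?case
    using one_notin_prime by (intro exI[of _ 0] exI[of _ 1]) simp
next
  case (add r A b)
  then obtain r' t where r': "t \<notin> p" "Poly_Mapping.map \<phi> r' = Poly_Mapping.single 0 (\<phi> t) * r"
    by blast
  obtain a s where b: "s \<notin> p" "b * \<phi> s = \<phi> a"
    using loc_quot_fraction[OF residue] by blast
  have "Poly_Mapping.map \<phi> (Poly_Mapping.single 0 s * r' + Poly_Mapping.single A (a * t))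
      = Poly_Mapping.single 0 (\<phi> s) * (Poly_Mapping.single 0 (\<phi> t) * r)
        + Poly_Mapping.single A (b * \<phi> s * \<phi> t)"
    by (simp add: map_hom_add map_hom_single_mult r'(2) hom_mult b(2))
  also have "\<dots> = Poly_Mapping.single 0 (\<phi> (t * s)) * (r + Poly_Mapping.single A b)"
    by (simp only: const_mult_const hom_mult distrib_left mult_single add_0_left) (simp add: mult_ac[where 'a = 'k])
  finally have "Poly_Mapping.map \<phi> (Poly_Mapping.single 0 s * r' + Poly_Mapping.single A (a * t))
      = Poly_Mapping.single 0 (\<phi> (t * s)) * (r + Poly_Mapping.single A b)" .
  moreover have "t * s \<notin> p"
    using prime_ideal_mult_notin[OF prime r'(1) b(1)] .
  ultimately show ?case by blast
qed

lemma is_ideal_scaled_images: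
  fixes I :: "('m::comm_monoid_add \<Rightarrow>\<^sub>0 'a) set"
  assumes I: "is_ideal I"
  shows "is_ideal {g. \<exists>f\<in>I. \<exists>s. s \<notin> p \<and> Poly_Mapping.map \<phi> f = Poly_Mapping.single 0 (\<phi> s) * g}"
    (is "is_ideal ?D")
proof (rule is_idealI)
  show "0 \<in> ?D"
    using is_ideal_zero[OF I] one_notin_prime by force
next
  fix x y assume "x \<in> ?D" "y \<in> ?D"
  then obtain f s f' s' where
    x: "f \<in> I" "s \<notin> p" "Poly_Mapping.map \<phi> f = Poly_Mapping.single 0 (\<phi> s) * x" and
    y: "f' \<in> I" "s' \<notin> p" "Poly_Mapping.map \<phi> f' = Poly_Mapping.single 0 (\<phi> s') * y"
    by blast
  have "Poly_Mapping.single 0 s' * f + Poly_Mapping.single 0 s * f' \<in> I"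
    using I x(1) y(1) by (simp add: is_ideal_add is_ideal_mult)
  moreover have "Poly_Mapping.map \<phi> (Poly_Mapping.single 0 s' * f + Poly_Mapping.single 0 s * f')
      = Poly_Mapping.single 0 (\<phi> (s * s')) * (x + y)"
    by (simp add: map_hom_add map_hom_single_mult x(3) y(3) const_mult_const hom_mult distrib_left
        mult.commute[of "\<phi> s"])
  ultimately show "x + y \<in> ?D"
    using prime_ideal_mult_notin[OF prime x(2) y(2)] by blast
next
  fix r x assume "x \<in> ?D"
  then obtain f s where x: "f \<in> I" "s \<notin> p" "Poly_Mapping.map \<phi> f = Poly_Mapping.single 0 (\<phi> s) * x"
    by blast
  obtain r' :: "'m \<Rightarrow>\<^sub>0 'a" and t where r: "t \<notin> p" "Poly_Mapping.map \<phi> r' = Poly_Mapping.single 0 (\<phi> t) * r"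
    using exists_denominator by blast
  have "r' * f \<in> I"
    using I x(1) by (simp add: is_ideal_mult)
  moreover have "Poly_Mapping.map \<phi> (r' * f) = Poly_Mapping.single 0 (\<phi> t) * r * (Poly_Mapping.single 0 (\<phi> s) * x)"
    by (simp add: map_hom_mult r(2) x(3))
  then have "Poly_Mapping.map \<phi> (r' * f) = Poly_Mapping.single 0 (\<phi> (t * s)) * (r * x)"
    by (simp only: mult_ac) (simp add: mult_single hom_mult)
  ultimately show "r * x \<in> ?D"
    using prime_ideal_mult_notin[OF prime r(1) x(2)] by blast
qed

lemma ideal_gen_map_image:
  fixes I :: "('m::comm_monoid_add \<Rightarrow>\<^sub>0 'a) set"
  assumes I: "is_ideal I" and "g \<in> ideal_gen (Poly_Mapping.map \<phi> ` I)"
  shows "\<exists>f\<in>I. \<exists>s. s \<notin> p \<and> Poly_Mapping.map \<phi> f = Poly_Mapping.single 0 (\<phi> s) * g"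
proof -
  have "Poly_Mapping.map \<phi> ` I
      \<subseteq> {g. \<exists>f\<in>I. \<exists>s. s \<notin> p \<and> Poly_Mapping.map \<phi> f = Poly_Mapping.single 0 (\<phi> s) * g}"
    using one_notin_prime by (force simp: hom_one)
  with assms(2) show ?thesis
    using ideal_gen_minimal[OF is_ideal_scaled_images[OF I]] by blast
qed

end

section \<open>Descent on the leading exponent\<close>

locale init_ideal_reduction =
  monomial_ordering ord + residue_map p \<phi>
  for ord :: "('v::finite \<Rightarrow>\<^sub>0 nat) \<Rightarrow> ('v \<Rightarrow>\<^sub>0 nat) \<Rightarrow> bool"
    and p :: "'a::comm_ring_1 set" and \<phi> :: "'a \<Rightarrow> 'k::field" +
  fixes I :: "('v, 'a) mpoly set" and \<psi> :: "'a \<Rightarrow> 'b::comm_ring"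
  assumes ideal: "is_ideal I"
    and loc_quot: "is_loc_quot p (contract I) \<psi>"
    and coeff_ideals_trivial: "\<forall>E. ideal_gen (\<psi> ` coeff_ideal (init_ideal ord I) E) = {0}
      \<or> ideal_gen (\<psi> ` coeff_ideal (init_ideal ord I) E) = UNIV"
begin

lemma exists_lead_coeff_canceller:
  assumes d: "d \<in> lead_coeffs ord I F" "d \<in> p"
  shows "\<exists>c h. c \<notin> p \<and> h \<in> I \<and> (\<forall>G\<in>Poly_Mapping.keys h. G = F \<or> ord G F)
    \<and> Poly_Mapping.lookup h F = c * d \<and> Poly_Mapping.map \<phi> h = 0"
proof -
  let ?L = "lead_coeffs ord I F"
  from coeff_ideals_trivial[rule_format, of F]
  consider (zero) "ideal_gen (\<psi> ` ?L) = {0}" | (unit) "ideal_gen (\<psi> ` ?L) = UNIV"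
    unfolding coeff_ideal_init_ideal[OF ideal] by blast
  then show ?thesis
  proof cases
    case zero
    then have "\<psi> d = 0"
      using d(1) ideal_gen_superset by blast
    then obtain s where s: "s \<notin> p" "Poly_Mapping.single 0 (s * d) \<in> I"
      using loc_quot_eq_0_iff[OF loc_quot] unfolding contract_def by blast
    let ?h = "Poly_Mapping.single F (s * d)"
    have "?h \<in> I"
      using single_in_ideal_of_const[OF ideal s(2)] .
    moreover have "\<phi> (s * d) = 0"
      using d(2) by (simp add: hom_mult residue_eq_0_iff)
    ultimately show ?thesis
      using s(1) by (intro exI[of _ s] exI[of _ ?h]) simp
  next
    case unit
    obtain c where c: "c \<in> ?L" "c \<notin> p"
    proof (cases "contract I \<subseteq> p")
      case True
      with that show ?thesis
        using loc_quot_unit_ideal_not_subset[OF loc_quot prime True unit] by blast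
    next
      case False
      with that show ?thesis
        using const_in_lead_coeffs[OF ideal] unfolding contract_def by blast
    qed
    then obtain h where h: "h \<in> I" "\<forall>G\<in>Poly_Mapping.keys h. G = F \<or> ord G F" "c = Poly_Mapping.lookup h F"
      unfolding lead_coeffs_def by blast
    let ?h = "Poly_Mapping.single 0 d * h"
    have "?h \<in> I"
      using h(1) ideal by (simp add: is_ideal_mult)
    moreover have "\<forall>G\<in>Poly_Mapping.keys ?h. G = F \<or> ord G F"
      using h(2) keys_const_mult_subset[of d h] by blast
    moreover have "\<phi> d = 0"
      using d(2) residue_eq_0_iff by blast
    then have "Poly_Mapping.map \<phi> ?h = 0"
      by (simp add: map_hom_single_mult)
    moreover have "Poly_Mapping.lookup ?h F = c * d"
      using h(3) by (simp add: lookup_const_mult mult.commute[of d])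
    ultimately show ?thesis
      using c(2) by blast
  qed
qed

lemma reduce_lead_exp_mod_prime:
  assumes f: "f \<in> I" "Poly_Mapping.map \<phi> f \<noteq> 0" and d: "Poly_Mapping.lookup f (lead_exp ord f) \<in> p"
  shows "\<exists>f'\<in>I. ord (lead_exp ord f') (lead_exp ord f)
    \<and> Poly_Mapping.keys (Poly_Mapping.map \<phi> f') = Poly_Mapping.keys (Poly_Mapping.map \<phi> f)"
proof -
  let ?F = "lead_exp ord f"
  have "f \<noteq> 0"
    using f(2) by auto
  then have below: "\<forall>G\<in>Poly_Mapping.keys f. G = ?F \<or> ord G ?F"
    using lead_exp_greatest(2) by blast
  obtain c h where ch: "c \<notin> p" "h \<in> I" "\<forall>G\<in>Poly_Mapping.keys h. G = ?F \<or> ord G ?F"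
    "Poly_Mapping.lookup h ?F = c * Poly_Mapping.lookup f ?F" "Poly_Mapping.map \<phi> h = 0"
    using exists_lead_coeff_canceller[OF lead_coeffsI[where ord = ord, OF f(1) below] d] by blast
  define f' where "f' = Poly_Mapping.single 0 c * f - h"
  have "f' \<in> I"
    unfolding f'_def using f(1) ch(2) ideal by (simp add: is_ideal_mult is_ideal_diff)
  have "Poly_Mapping.map \<phi> f' = Poly_Mapping.single 0 (\<phi> c) * Poly_Mapping.map \<phi> f"
    unfolding f'_def by (simp add: map_hom_diff map_hom_single_mult ch(5))
  moreover have "\<phi> c \<noteq> 0"
    using ch(1) residue_eq_0_iff by blast
  ultimately have keys: "Poly_Mapping.keys (Poly_Mapping.map \<phi> f') = Poly_Mapping.keys (Poly_Mapping.map \<phi> f)"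
    by (simp add: keys_const_mult)
  then have "Poly_Mapping.single 0 c * f \<noteq> h"
    using f(2) unfolding f'_def by (metis keys_eq_empty map_hom_zero right_minus_eq)
  moreover have "\<forall>G\<in>Poly_Mapping.keys (Poly_Mapping.single 0 c * f). G = ?F \<or> ord G ?F"
    using below keys_const_mult_subset[of c f] by blast
  ultimately have "ord (lead_exp ord f') ?F"
    unfolding f'_def using ch(3,4) by (intro lead_exp_diff_less) (simp_all add: lookup_const_mult)
  with \<open>f' \<in> I\<close> keys show ?thesis
    by blast
qed

lemma lead_coeffs_notin_prime:
  assumes "f \<in> I" "Poly_Mapping.map \<phi> f \<noteq> 0"
  shows "\<exists>c\<in>lead_coeffs ord I (lead_exp ord (Poly_Mapping.map \<phi> f)). c \<notin> p"
  using assms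
proof (induction f rule: wf_induct_rule[OF wf_inv_image[OF wf_monomial_order[OF monomial_order], of "lead_exp ord"]])
  case (1 f)
  let ?F = "lead_exp ord f" and ?d = "Poly_Mapping.lookup f (lead_exp ord f)"
  show ?case
  proof (cases "?d \<in> p")
    case False
    have "f \<noteq> 0"
      using "1.prems"(2) by auto
    then have "?d \<in> lead_coeffs ord I ?F"
      using lead_coeffsI[OF "1.prems"(1)] lead_exp_greatest(2) by blast
    moreover from False have "lead_exp ord (Poly_Mapping.map \<phi> f) = ?F"
      by (simp add: lead_exp_map residue_eq_0_iff)
    ultimately show ?thesis
      using False by auto
  next
    case True
    then obtain f' where f': "f' \<in> I" "ord (lead_exp ord f') ?F"
      "Poly_Mapping.keys (Poly_Mapping.map \<phi> f') = Poly_Mapping.keys (Poly_Mapping.map \<phi> f)"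
      using reduce_lead_exp_mod_prime "1.prems" by blast
    then have "Poly_Mapping.map \<phi> f' \<noteq> 0"
      using "1.prems"(2) by (metis keys_eq_empty)
    with "1.IH"[of f'] f' show ?thesis
      using lead_exp_keys_cong[OF f'(3), of ord] by simp
  qed
qed

lemma init_ideal_map_supset:
  "init_ideal ord (ideal_gen (Poly_Mapping.map \<phi> ` I)) \<subseteq> ideal_gen (Poly_Mapping.map \<phi> ` init_ideal ord I)"
  (is "_ \<subseteq> ?L")
proof -
  have L: "is_ideal ?L"
    by (rule is_ideal_ideal_gen)
  have "init_term ord g \<in> ?L" if g: "g \<in> ideal_gen (Poly_Mapping.map \<phi> ` I)" "g \<noteq> 0" for g
  proof -
    obtain f s where f: "f \<in> I" "s \<notin> p" "Poly_Mapping.map \<phi> f = Poly_Mapping.single 0 (\<phi> s) * g"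
      using ideal_gen_map_image[OF ideal g(1)] by blast
    have "\<phi> s \<noteq> 0"
      using f(2) residue_eq_0_iff by blast
    then have keys: "Poly_Mapping.keys (Poly_Mapping.map \<phi> f) = Poly_Mapping.keys g"
      unfolding f(3) by (rule keys_const_mult)
    define E where "E = lead_exp ord g"
    have "Poly_Mapping.map \<phi> f \<noteq> 0"
      using keys g(2) by (metis keys_eq_empty)
    then obtain c where c: "c \<in> lead_coeffs ord I E" "c \<notin> p"
      using lead_coeffs_notin_prime[OF f(1)] lead_exp_keys_cong[OF keys] unfolding E_def by auto
    then have "Poly_Mapping.single E c \<in> init_ideal ord I"
      using single_in_init_ideal_iff[OF ideal] by blast
    then have "Poly_Mapping.single E (\<phi> c) \<in> ?L"
      using ideal_gen_superset[of "Poly_Mapping.map \<phi> ` init_ideal ord I"] by force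
    moreover have "\<phi> c \<noteq> 0"
      using c(2) residue_eq_0_iff by blast
    then have "init_term ord g
        = Poly_Mapping.single 0 (Poly_Mapping.lookup g E / \<phi> c) * Poly_Mapping.single E (\<phi> c)"
      by (simp add: init_term_def E_def mult_single)
    ultimately show ?thesis
      using is_ideal_mult[OF L] by simp
  qed
  then show ?thesis
    unfolding init_ideal_def[of ord "ideal_gen _"] by (intro ideal_gen_minimal[OF L]) blast
qed

end

theorem proposition3p13:
  fixes ord :: "('v::finite \<Rightarrow>\<^sub>0 nat) \<Rightarrow> ('v \<Rightarrow>\<^sub>0 nat) \<Rightarrow> bool"
    and I :: "('v, 'a::comm_ring_1) mpoly set"
    and p :: "'a set"
    and \<psi> :: "'a \<Rightarrow> 'b::comm_ring"
    and \<phi> :: "'a \<Rightarrow> 'k::field"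
  assumes "noetherian_ring TYPE('a)"
    and "monomial_order ord"
    and "is_ideal I"
    and "prime_ideal p"
    and B: "is_loc_quot p (contract I) \<psi>"
    and kp: "is_loc_quot p p \<phi>"
    and "\<forall>E. ideal_gen (\<psi> ` coeff_ideal (init_ideal ord I) E) = {0}
            \<or> ideal_gen (\<psi> ` coeff_ideal (init_ideal ord I) E) = UNIV"
  shows "ideal_gen (Poly_Mapping.map \<phi> ` init_ideal ord I)
         = init_ideal ord (ideal_gen (Poly_Mapping.map \<phi> ` I))"
proof -
  interpret init_ideal_reduction ord p \<phi> I \<psi>
    using assms(2-7) by unfold_locales auto
  show ?thesis
    using init_ideal_map_subset[OF unital_ring_hom_residue] init_ideal_map_supset
    by (rule equalityI)
qed

end
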